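(* In the reachability strategy-improvement algorithm described in the context, for all $i\ge0$ the player-1 selector $\gamma_i$ obtained at iteration $i$ is proper.
   Context: Concurrent game structure $G=(S,M,\Gamma_1,\Gamma_2,\delta)$: finite states, finite moves, nonempty move sets $\Gamma_i(s)$, $\delta(s,a_1,a_2)\in\mathrm{Distr}(S)$ (simultaneous independent moves). Selectors assign to each state a distribution on available moves; $\overline{\xi}$ is the memoryless strategy playing $\xi$ forever; $\Pr_s^{\pi_1,\pi_2}$ is the induced measure on plays; $\mathrm{Reach}(X)$: plays visiting $X$. $\mathrm{val}_1^{\pi_1}(\mathrm{Reach}(T))(s)=\inf_{\pi_2}\Pr_s^{\pi_1,\pi_2}(\mathrm{Reach}(T))$, $\mathrm{val}_1(\mathrm{Reach}(T))=\sup_{\pi_1}\mathrm{val}_1^{\pi_1}(\mathrm{Reach}(T))$. For a valuation $v:S\to[0,1]$: $\mathrm{Pre}_{\xi_1,\xi_2}(v)(s)=\sum_{a,b}\sum_tv(t)\delta(s,a,b)(t)\xi_1(s)(a)\xi_2(s)(b)$, $\mathrm{Pre}_{1:\xi_1}(v)(s)=\inf_{\xi_2}\mathrm{Pre}_{\xi_1,\xi_2}(v)(s)$, $\mathrm{Pre}_1(v)(s)=\sup_{\xi_1}\mathrm{Pre}_{1:\xi_1}(v)(s)$. Fix $T\subseteq S$, $W_2=\{s:\mathrm{val}_1(\mathrm{Reach}(T))(s)=0\}$; all states of $T\cup W_2$ are absorbing. A player-1 strategy is proper if, against every player-2 strategy, from every $s\in S\setminus(T\cup W_2)$, $T\cup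 W_2$ is reached with probability 1; a selector $\xi$ is proper if $\overline{\xi}$ is. The algorithm: $\gamma_0$ is the uniform selector on $\Gamma_1(s)$, $v_i=\mathrm{val}_1^{\overline{\gamma}_i}(\mathrm{Reach}(T))$. At iteration $i$: $I=\{s\in S\setminus(T\cup W_2):\mathrm{Pre}_1(v_i)(s)>v_i(s)\}$; $\xi_1$ is a selector with $\mathrm{Pre}_{1:\xi_1}(v_i)(s)=\mathrm{Pre}_1(v_i)(s)$ for $s\in I$; $\gamma_{i+1}(s)=\gamma_i(s)$ for $s\notin I$ and $\gamma_{i+1}(s)=\xi_1(s)$ for $s\in I$; stop when $I=\emptyset$. *)

theory Defs
  imports "HOL-Probability.Probability"
begin

text \<open>Concurrent game structure with finite state type 's and finite move type 'm:
  G1, G2 :: 's => 'm set (available moves), delta :: 's => 'm => 'm => 's pmf.\<close>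

definition selector :: "('s \<Rightarrow> 'm set) \<Rightarrow> ('s \<Rightarrow> 'm pmf) \<Rightarrow> bool" where
  "selector G \<xi> \<longleftrightarrow> (\<forall>s. set_pmf (\<xi> s) \<subseteq> G s)"

definition strategy :: "('s \<Rightarrow> 'm set) \<Rightarrow> ('s list \<Rightarrow> 'm pmf) \<Rightarrow> bool" where
  "strategy G \<pi> \<longleftrightarrow> (\<forall>h. h \<noteq> [] \<longrightarrow> set_pmf (\<pi> h) \<subseteq> G (last h))"

definition memoryless :: "('s \<Rightarrow> 'm pmf) \<Rightarrow> 's list \<Rightarrow> 'm pmf" where
  "memoryless \<xi> = (\<lambda>h. \<xi> (last h))"

fun reach_within :: "('s::finite \<Rightarrow> 'm::finite \<Rightarrow> 'm \<Rightarrow> 's pmf) \<Rightarrow> ('s list \<Rightarrow> 'm pmf)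
    \<Rightarrow> ('s list \<Rightarrow> 'm pmf) \<Rightarrow> 's set \<Rightarrow> nat \<Rightarrow> 's list \<Rightarrow> real" where
  "reach_within \<delta> \<pi>1 \<pi>2 X 0 h = (if last h \<in> X then 1 else 0)"
| "reach_within \<delta> \<pi>1 \<pi>2 X (Suc n) h =
     (if last h \<in> X then 1 else
      (\<Sum>a\<in>UNIV. \<Sum>b\<in>UNIV. \<Sum>t\<in>UNIV.
         pmf (\<pi>1 h) a * pmf (\<pi>2 h) b * pmf (\<delta> (last h) a b) t * reach_within \<delta> \<pi>1 \<pi>2 X n (h @ [t])))"

text \<open>Pr_s^{pi1,pi2}(Reach X): by continuity of measure, the limit (supremum) of the
  probabilities of visiting X within n steps.\<close>
definition reach_prob :: "('s::finite \<Rightarrow> 'm::finite \<Rightarrow> 'm \<Rightarrow> 's pmf) \<Rightarrow> ('s list \<Rightarrow> 'm pmf)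
    \<Rightarrow> ('s list \<Rightarrow> 'm pmf) \<Rightarrow> 's set \<Rightarrow> 's \<Rightarrow> real" where
  "reach_prob \<delta> \<pi>1 \<pi>2 X s = (SUP n. reach_within \<delta> \<pi>1 \<pi>2 X n [s])"

definition val1_strat :: "('s::finite \<Rightarrow> 'm::finite set) \<Rightarrow> ('s \<Rightarrow> 'm \<Rightarrow> 'm \<Rightarrow> 's pmf)
    \<Rightarrow> ('s list \<Rightarrow> 'm pmf) \<Rightarrow> 's set \<Rightarrow> 's \<Rightarrow> real" where
  "val1_strat G2 \<delta> \<pi>1 X s = (INF \<pi>2 \<in> {\<pi>. strategy G2 \<pi>}. reach_prob \<delta> \<pi>1 \<pi>2 X s)"

definition val1 :: "('s::finite \<Rightarrow> 'm::finite set) \<Rightarrow> ('s \<Rightarrow> 'm set) \<Rightarrow> ('s \<Rightarrow> 'm \<Rightarrow> 'm \<Rightarrow> 's pmf)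
    \<Rightarrow> 's set \<Rightarrow> 's \<Rightarrow> real" where
  "val1 G1 G2 \<delta> X s = (SUP \<pi>1 \<in> {\<pi>. strategy G1 \<pi>}. val1_strat G2 \<delta> \<pi>1 X s)"

definition W2 :: "('s::finite \<Rightarrow> 'm::finite set) \<Rightarrow> ('s \<Rightarrow> 'm set) \<Rightarrow> ('s \<Rightarrow> 'm \<Rightarrow> 'm \<Rightarrow> 's pmf)
    \<Rightarrow> 's set \<Rightarrow> 's set" where
  "W2 G1 G2 \<delta> T = {s. val1 G1 G2 \<delta> T s = 0}"

definition proper :: "('s::finite \<Rightarrow> 'm::finite set) \<Rightarrow> ('s \<Rightarrow> 'm set) \<Rightarrow> ('s \<Rightarrow> 'm \<Rightarrow> 'm \<Rightarrow> 's pmf)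
    \<Rightarrow> 's set \<Rightarrow> ('s list \<Rightarrow> 'm pmf) \<Rightarrow> bool" where
  "proper G1 G2 \<delta> T \<pi>1 \<longleftrightarrow>
     (\<forall>\<pi>2. strategy G2 \<pi>2 \<longrightarrow>
        (\<forall>s. s \<notin> T \<union> W2 G1 G2 \<delta> T \<longrightarrow> reach_prob \<delta> \<pi>1 \<pi>2 (T \<union> W2 G1 G2 \<delta> T) s = 1))"

definition proper_selector :: "('s::finite \<Rightarrow> 'm::finite set) \<Rightarrow> ('s \<Rightarrow> 'm set)
    \<Rightarrow> ('s \<Rightarrow> 'm \<Rightarrow> 'm \<Rightarrow> 's pmf) \<Rightarrow> 's set \<Rightarrow> ('s \<Rightarrow> 'm pmf) \<Rightarrow> bool" where
  "proper_selector G1 G2 \<delta> T \<xi> \<longleftrightarrow> proper G1 G2 \<delta> T (memoryless \<xi>)"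

definition PreAB :: "('s::finite \<Rightarrow> 'm::finite \<Rightarrow> 'm \<Rightarrow> 's pmf) \<Rightarrow> ('s \<Rightarrow> 'm pmf) \<Rightarrow> ('s \<Rightarrow> 'm pmf)
    \<Rightarrow> ('s \<Rightarrow> real) \<Rightarrow> 's \<Rightarrow> real" where
  "PreAB \<delta> \<xi>1 \<xi>2 v s =
     (\<Sum>a\<in>UNIV. \<Sum>b\<in>UNIV. \<Sum>t\<in>UNIV. v t * pmf (\<delta> s a b) t * pmf (\<xi>1 s) a * pmf (\<xi>2 s) b)"

definition Pre1_sel :: "('s::finite \<Rightarrow> 'm::finite set) \<Rightarrow> ('s \<Rightarrow> 'm \<Rightarrow> 'm \<Rightarrow> 's pmf)
    \<Rightarrow> ('s \<Rightarrow> 'm pmf) \<Rightarrow> ('s \<Rightarrow> real) \<Rightarrow> 's \<Rightarrow> real" where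
  "Pre1_sel G2 \<delta> \<xi>1 v s = (INF \<xi>2 \<in> {\<xi>. selector G2 \<xi>}. PreAB \<delta> \<xi>1 \<xi>2 v s)"

definition Pre1 :: "('s::finite \<Rightarrow> 'm::finite set) \<Rightarrow> ('s \<Rightarrow> 'm set) \<Rightarrow> ('s \<Rightarrow> 'm \<Rightarrow> 'm \<Rightarrow> 's pmf)
    \<Rightarrow> ('s \<Rightarrow> real) \<Rightarrow> 's \<Rightarrow> real" where
  "Pre1 G1 G2 \<delta> v s = (SUP \<xi>1 \<in> {\<xi>. selector G1 \<xi>}. Pre1_sel G2 \<delta> \<xi>1 v s)"

definition sel_val :: "('s::finite \<Rightarrow> 'm::finite set) \<Rightarrow> ('s \<Rightarrow> 'm \<Rightarrow> 'm \<Rightarrow> 's pmf)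
    \<Rightarrow> 's set \<Rightarrow> ('s \<Rightarrow> 'm pmf) \<Rightarrow> 's \<Rightarrow> real" where
  "sel_val G2 \<delta> T \<gamma> = val1_strat G2 \<delta> (memoryless \<gamma>) T"

definition improve_set :: "('s::finite \<Rightarrow> 'm::finite set) \<Rightarrow> ('s \<Rightarrow> 'm set) \<Rightarrow> ('s \<Rightarrow> 'm \<Rightarrow> 'm \<Rightarrow> 's pmf)
    \<Rightarrow> 's set \<Rightarrow> ('s \<Rightarrow> 'm pmf) \<Rightarrow> 's set" where
  "improve_set G1 G2 \<delta> T \<gamma> =
     {s. s \<notin> T \<union> W2 G1 G2 \<delta> T \<and> Pre1 G1 G2 \<delta> (sel_val G2 \<delta> T \<gamma>) s > sel_val G2 \<delta> T \<gamma> s}"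

end

theory Submission
  imports Defs
begin

text \<open>Call a nonempty set \<open>C\<close> disjoint from \<open>T \<union> W2\<close> a trap for a selector \<open>\<xi>\<close> if from
  each state of \<open>C\<close> player 2 has a move that keeps the play in \<open>C\<close> surely against every move in
  the support of \<open>\<xi>\<close>. A selector is proper iff it has no trap: a trap keeps the play away from
  \<open>T \<union> W2\<close> forever, while without traps the positive attractor of \<open>T \<union> W2\<close> is everything,
  so from every history \<open>T \<union> W2\<close> is reached within \<open>K\<close> steps with probability at least
  \<open>p ^ K > 0\<close>, hence almost surely.

  A trap of the uniform selector works against all player-1 moves, so it lies in \<open>W2\<close>; hence
  the initial selector is proper. For the step, let \<open>v\<close> be the value of the proper selector
  \<open>\<gamma>\<close>. Off \<open>T\<close> we have \<open>v \<le> Pre1_sel \<gamma> v\<close>, and the switched selector \<open>\<gamma>'\<close> makes this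
  strict on the improvement set \<open>I\<close>. So on a trap of \<open>\<gamma>'\<close>, \<open>v\<close> is subharmonic for the chain
  induced by \<open>\<gamma>'\<close> and player 2's trapping moves; the states where \<open>v\<close> is maximal form a closed
  set on which \<open>v\<close> is harmonic, hence disjoint from \<open>I\<close>, where \<open>\<gamma>'\<close> and \<open>\<gamma>\<close> differ. They
  form a trap of \<open>\<gamma>\<close>, a contradiction.\<close>

lemma sum_joint_pmf_eq_1:
  fixes p q :: "'m::finite pmf" and r :: "'m \<Rightarrow> 'm \<Rightarrow> 's::finite pmf"
  shows "(\<Sum>a\<in>UNIV. \<Sum>b\<in>UNIV. \<Sum>t\<in>UNIV. pmf p a * pmf q b * pmf (r a b) t) = 1"
  by (simp add: sum_distrib_left[symmetric] sum_pmf_eq_1)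

lemma pmf_bind_eq_sum:
  fixes p :: "'a::finite pmf"
  shows "pmf (bind_pmf p f) t = (\<Sum>a\<in>UNIV. pmf p a * pmf (f a) t)"
  unfolding pmf_bind by (subst integral_measure_pmf_real[of UNIV]) (auto simp: mult.commute)

lemma reach_within_in: "last h \<in> X \<Longrightarrow> reach_within \<delta> \<pi>1 \<pi>2 X n h = 1"
  by (cases n) auto

lemma reach_within_Suc_notin:
  "last h \<notin> X \<Longrightarrow> reach_within \<delta> \<pi>1 \<pi>2 X (Suc n) h = (\<Sum>a\<in>UNIV. \<Sum>b\<in>UNIV. \<Sum>t\<in>UNIV.
     pmf (\<pi>1 h) a * pmf (\<pi>2 h) b * pmf (\<delta> (last h) a b) t * reach_within \<delta> \<pi>1 \<pi>2 X n (h @ [t]))"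
  by simp

lemma reach_within_nonneg: "0 \<le> reach_within \<delta> \<pi>1 \<pi>2 X n h"
  by (induction n arbitrary: h) (auto intro!: sum_nonneg)

lemma reach_within_le_1: "reach_within \<delta> \<pi>1 \<pi>2 X n h \<le> 1"
proof (induction n arbitrary: h)
  case (Suc n)
  have "(\<Sum>a\<in>UNIV. \<Sum>b\<in>UNIV. \<Sum>t\<in>UNIV.
         pmf (\<pi>1 h) a * pmf (\<pi>2 h) b * pmf (\<delta> (last h) a b) t * reach_within \<delta> \<pi>1 \<pi>2 X n (h @ [t]))
     \<le> (\<Sum>a\<in>UNIV. \<Sum>b\<in>UNIV. \<Sum>t\<in>UNIV. pmf (\<pi>1 h) a * pmf (\<pi>2 h) b * pmf (\<delta> (last h) a b) t)"
    by (intro sum_mono mult_left_le) (auto simp: Suc)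
  then show ?case by (simp add: sum_joint_pmf_eq_1)
qed simp

lemma reach_within_le_Suc: "reach_within \<delta> \<pi>1 \<pi>2 X n h \<le> reach_within \<delta> \<pi>1 \<pi>2 X (Suc n) h"
proof (induction n arbitrary: h)
  case 0
  then show ?case by (auto intro!: sum_nonneg simp: reach_within_nonneg)
next
  case (Suc n)
  show ?case
  proof (cases "last h \<in> X")
    case False
    then show ?thesis
      unfolding reach_within_Suc_notin[OF False] by (intro sum_mono mult_left_mono Suc.IH) auto
  qed (simp add: reach_within_in)
qed

lemma reach_within_le_reach_prob: "reach_within \<delta> \<pi>1 \<pi>2 X n [s] \<le> reach_prob \<delta> \<pi>1 \<pi>2 X s"
  unfolding reach_prob_def
  by (rule cSUP_upper) (auto intro: bdd_aboveI[where M=1] reach_within_le_1)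

lemma reach_prob_nonneg: "0 \<le> reach_prob \<delta> \<pi>1 \<pi>2 X s"
  using reach_within_le_reach_prob[of _ _ _ _ 0] reach_within_nonneg order_trans by metis

lemma reach_prob_le_1: "reach_prob \<delta> \<pi>1 \<pi>2 X s \<le> 1"
  unfolding reach_prob_def by (rule cSUP_least) (auto intro: reach_within_le_1)

definition trap :: "('s \<Rightarrow> 'm set) \<Rightarrow> ('s \<Rightarrow> 'm \<Rightarrow> 'm \<Rightarrow> 's pmf) \<Rightarrow> ('s \<Rightarrow> 'm set) \<Rightarrow> 's set \<Rightarrow> bool" where
  "trap G2 \<delta> A C \<longleftrightarrow> (\<forall>s\<in>C. \<exists>b\<in>G2 s. \<forall>a\<in>A s. set_pmf (\<delta> s a b) \<subseteq> C)"

lemma trap_witness: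
  assumes "trap G2 \<delta> A C" and "\<forall>s. G2 s \<noteq> {}"
  obtains b where "\<forall>s. b s \<in> G2 s" and "\<forall>s\<in>C. \<forall>a\<in>A s. set_pmf (\<delta> s a (b s)) \<subseteq> C"
proof -
  have "\<forall>s. \<exists>b\<in>G2 s. s \<in> C \<longrightarrow> (\<forall>a\<in>A s. set_pmf (\<delta> s a b) \<subseteq> C)"
    using assms unfolding trap_def by (metis all_not_in_conv)
  then show thesis using that by metis
qed

lemma memoryless_strategy: "selector G \<xi> \<Longrightarrow> strategy G (memoryless \<xi>)"
  by (simp add: strategy_def selector_def memoryless_def)

lemma reach_within_eq_0_in_trap:
  assumes \<pi>1: "\<forall>h. h \<noteq> [] \<longrightarrow> set_pmf (\<pi>1 h) \<subseteq> A (last h)"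
    and b: "\<forall>s\<in>C. \<forall>a\<in>A s. set_pmf (\<delta> s a (b s)) \<subseteq> C"
    and CX: "C \<inter> X = {}"
  shows "h \<noteq> [] \<Longrightarrow> last h \<in> C \<Longrightarrow> reach_within \<delta> \<pi>1 (memoryless (\<lambda>s. return_pmf (b s))) X n h = 0"
proof (induction n arbitrary: h)
  case (Suc n)
  let ?\<pi>2 = "memoryless (\<lambda>s. return_pmf (b s))"
  have notin: "last h \<notin> X" using Suc.prems CX by auto
  have "pmf (\<pi>1 h) a * pmf (?\<pi>2 h) b' * pmf (\<delta> (last h) a b') t * reach_within \<delta> \<pi>1 ?\<pi>2 X n (h @ [t]) = 0"
    for a b' t
  proof (cases "pmf (\<pi>1 h) a = 0 \<or> b' \<noteq> b (last h) \<or> pmf (\<delta> (last h) a b') t = 0")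
    case False
    then have "a \<in> A (last h)" using \<pi>1 Suc.prems by (auto simp: set_pmf_eq)
    then have "t \<in> C" using b Suc.prems False by (auto simp: set_pmf_eq)
    then show ?thesis using Suc.IH[of "h @ [t]"] by simp
  next
    case True
    then consider "pmf (\<pi>1 h) a = 0" | "b' \<noteq> b (last h)" | "pmf (\<delta> (last h) a b') t = 0"
      by blast
    then show ?thesis by cases (simp_all add: memoryless_def)
  qed
  then show ?case by (simp only: reach_within_Suc_notin[OF notin] sum.neutral_const)
qed (use CX in auto)

lemma ex_trap_strategy:
  assumes "trap G2 \<delta> A C" and "\<forall>s. G2 s \<noteq> {}" and "C \<inter> X = {}"
  shows "\<exists>\<pi>2. strategy G2 \<pi>2 \<and> (\<forall>\<pi>1 s. (\<forall>h. h \<noteq> [] \<longrightarrow> set_pmf (\<pi>1 h) \<subseteq> A (last h)) \<longrightarrow> s \<in> C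
                \<longrightarrow> reach_prob \<delta> \<pi>1 \<pi>2 X s = 0)"
proof -
  obtain b where "\<forall>s. b s \<in> G2 s" and b: "\<forall>s\<in>C. \<forall>a\<in>A s. set_pmf (\<delta> s a (b s)) \<subseteq> C"
    using trap_witness[OF assms(1,2)] by blast
  then have "strategy G2 (memoryless (\<lambda>s. return_pmf (b s)))"
    by (intro memoryless_strategy) (simp add: selector_def)
  moreover have "reach_prob \<delta> \<pi>1 (memoryless (\<lambda>s. return_pmf (b s))) X s = 0"
    if "\<forall>h. h \<noteq> [] \<longrightarrow> set_pmf (\<pi>1 h) \<subseteq> A (last h)" and "s \<in> C" for \<pi>1 s
  proof -
    have "reach_within \<delta> \<pi>1 (memoryless (\<lambda>s. return_pmf (b s))) X n [s] = 0" for n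
      by (rule reach_within_eq_0_in_trap[where A=A and C=C and b=b and \<delta>=\<delta>, OF _ b assms(3)])
        (use that in auto)
    then show ?thesis by (simp add: reach_prob_def)
  qed
  ultimately show ?thesis by blast
qed

lemma one_minus_reach_within_add:
  assumes c: "\<forall>h. h \<noteq> [] \<longrightarrow> c \<le> reach_within \<delta> \<pi>1 \<pi>2 X N h"
  shows "h \<noteq> [] \<Longrightarrow> 1 - reach_within \<delta> \<pi>1 \<pi>2 X (n + N) h \<le> (1 - c) * (1 - reach_within \<delta> \<pi>1 \<pi>2 X n h)"
proof (induction n arbitrary: h)
  case 0
  then show ?case using c by (cases "last h \<in> X") (auto simp: reach_within_in)
next
  case (Suc n)
  show ?case
  proof (cases "last h \<in> X")
    case False
    let ?w = "\<lambda>a b t. pmf (\<pi>1 h) a * pmf (\<pi>2 h) b * pmf (\<delta> (last h) a b) t"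
    have one: "(\<Sum>a\<in>UNIV. \<Sum>b\<in>UNIV. \<Sum>t\<in>UNIV. ?w a b t) = 1" by (rule sum_joint_pmf_eq_1)
    have complement: "1 - reach_within \<delta> \<pi>1 \<pi>2 X (Suc k) h
        = (\<Sum>a\<in>UNIV. \<Sum>b\<in>UNIV. \<Sum>t\<in>UNIV. ?w a b t * (1 - reach_within \<delta> \<pi>1 \<pi>2 X k (h @ [t])))" for k
      unfolding reach_within_Suc_notin[OF False] using one
      by (simp add: right_diff_distrib sum_subtractf del: reach_within.simps)
    have "1 - reach_within \<delta> \<pi>1 \<pi>2 X (Suc n + N) h
        \<le> (\<Sum>a\<in>UNIV. \<Sum>b\<in>UNIV. \<Sum>t\<in>UNIV. ?w a b t * ((1 - c) * (1 - reach_within \<delta> \<pi>1 \<pi>2 X n (h @ [t]))))"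
      unfolding add_Suc complement by (intro sum_mono mult_left_mono Suc.IH) auto
    also have "\<dots> = (1 - c) * (1 - reach_within \<delta> \<pi>1 \<pi>2 X (Suc n) h)"
      unfolding complement by (simp add: sum_distrib_left mult.left_commute)
    finally show ?thesis .
  qed (simp add: reach_within_in)
qed

lemma one_minus_reach_within_mult:
  assumes c: "\<forall>h. h \<noteq> [] \<longrightarrow> c \<le> reach_within \<delta> \<pi>1 \<pi>2 X N h" and h: "h \<noteq> []"
  shows "1 - reach_within \<delta> \<pi>1 \<pi>2 X (m * N) h \<le> (1 - c) ^ m"
proof (induction m)
  case 0
  then show ?case using reach_within_nonneg[of \<delta> \<pi>1 \<pi>2 X 0 h] by simp
next
  case (Suc m)
  have "c \<le> 1" using c reach_within_le_1 order_trans by (metis list.discI)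
  have "1 - reach_within \<delta> \<pi>1 \<pi>2 X (Suc m * N) h \<le> (1 - c) * (1 - reach_within \<delta> \<pi>1 \<pi>2 X (m * N) h)"
    using one_minus_reach_within_add[OF c h, of "m * N"] by (simp add: add.commute)
  also have "\<dots> \<le> (1 - c) * (1 - c) ^ m"
    using Suc \<open>c \<le> 1\<close> by (intro mult_left_mono) auto
  finally show ?case by simp
qed

lemma reach_prob_eq_1_of_uniform_bound:
  assumes c: "\<forall>h. h \<noteq> [] \<longrightarrow> c \<le> reach_within \<delta> \<pi>1 \<pi>2 X N h" and "0 < c"
  shows "reach_prob \<delta> \<pi>1 \<pi>2 X s = 1"
proof (rule antisym[OF reach_prob_le_1])
  have "c \<le> 1" using c reach_within_le_1 order_trans by (metis list.discI)
  then have "(\<lambda>m. 1 - (1 - c) ^ m) \<longlonglongrightarrow> 1 - 0"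
    using \<open>0 < c\<close> by (intro tendsto_intros) auto
  moreover have "1 - (1 - c) ^ m \<le> reach_prob \<delta> \<pi>1 \<pi>2 X s" for m
    using one_minus_reach_within_mult[OF c, of "[s]" m] reach_within_le_reach_prob[of \<delta> \<pi>1 \<pi>2 X "m * N" s]
    by simp
  ultimately show "1 \<le> reach_prob \<delta> \<pi>1 \<pi>2 X s"
    using LIMSEQ_le_const2 by fastforce
qed

definition pos_attr :: "('s \<Rightarrow> 'm set) \<Rightarrow> ('s \<Rightarrow> 'm \<Rightarrow> 'm \<Rightarrow> 's pmf) \<Rightarrow> ('s \<Rightarrow> 'm pmf) \<Rightarrow> 's set \<Rightarrow> 's set" where
  "pos_attr G2 \<delta> \<xi> Z = Z \<union> {s. \<forall>b\<in>G2 s. \<exists>a\<in>set_pmf (\<xi> s). set_pmf (\<delta> s a b) \<inter> Z \<noteq> {}}"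

lemma subset_pos_attr: "Z \<subseteq> pos_attr G2 \<delta> \<xi> Z"
  by (auto simp: pos_attr_def)

lemma subset_pos_attr_iter: "X \<subseteq> (pos_attr G2 \<delta> \<xi> ^^ k) X"
  by (induction k) (auto dest: subsetD[OF subset_pos_attr])

lemma pos_attr_iter_fixpoint:
  fixes X :: "'s::finite set"
  obtains k where "pos_attr G2 \<delta> \<xi> ((pos_attr G2 \<delta> \<xi> ^^ k) X) = (pos_attr G2 \<delta> \<xi> ^^ k) X"
proof (rule ccontr)
  let ?Z = "\<lambda>k. (pos_attr G2 \<delta> \<xi> ^^ k) X"
  assume "\<not> thesis"
  then have "?Z (Suc k) \<noteq> ?Z k" for k
    using that by force
  then have grow: "?Z k \<subset> ?Z (Suc k)" for k
    using subset_pos_attr[of "?Z k" G2 \<delta> \<xi>] by auto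
  have "k \<le> card (?Z k)" for k
  proof (induction k)
    case (Suc k)
    then show ?case using psubset_card_mono[OF finite grow[of k]] by simp
  qed simp
  from this[of "Suc (card (UNIV :: 's set))"] show False
    using card_mono[OF finite subset_UNIV, of "?Z (Suc (card (UNIV :: 's set)))"] by simp
qed

lemma trap_compl_pos_attr_fixpoint:
  "pos_attr G2 \<delta> \<xi> Z = Z \<Longrightarrow> trap G2 \<delta> (\<lambda>s. set_pmf (\<xi> s)) (- Z)"
  unfolding trap_def pos_attr_def by blast

lemma reach_within_pos_attr_iter:
  assumes "strategy G2 \<pi>2" and "0 < p" and "p \<le> 1"
    and p: "\<forall>s a b t. 0 < pmf (\<xi> s) a * pmf (\<delta> s a b) t \<longrightarrow> p \<le> pmf (\<xi> s) a * pmf (\<delta> s a b) t"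
  shows "h \<noteq> [] \<Longrightarrow> last h \<in> (pos_attr G2 \<delta> \<xi> ^^ k) X \<Longrightarrow> p ^ k \<le> reach_within \<delta> (memoryless \<xi>) \<pi>2 X k h"
proof (induction k arbitrary: h)
  case (Suc k)
  let ?Z = "(pos_attr G2 \<delta> \<xi> ^^ k) X"
  let ?R = "reach_within \<delta> (memoryless \<xi>) \<pi>2 X"
  let ?s = "last h"
  have "p ^ Suc k \<le> p ^ k"
    using \<open>0 < p\<close> \<open>p \<le> 1\<close> by (simp add: mult_left_le_one_le)
  have "p ^ Suc k \<le> 1"
    using \<open>0 < p\<close> \<open>p \<le> 1\<close> power_le_one[of p "Suc k"] by simp
  consider "?s \<in> ?Z" | "?s \<in> X" | "?s \<notin> X" "\<forall>b\<in>G2 ?s. \<exists>a\<in>set_pmf (\<xi> ?s). set_pmf (\<delta> ?s a b) \<inter> ?Z \<noteq> {}"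
    using Suc.prems(2) unfolding funpow.simps comp_def pos_attr_def[of G2 \<delta> \<xi> ?Z] by blast
  then show ?case
  proof cases
    case 1
    then show ?thesis
      using Suc.IH[OF Suc.prems(1)] reach_within_le_Suc[of \<delta> "memoryless \<xi>" \<pi>2 X k h] \<open>p ^ Suc k \<le> p ^ k\<close>
      by linarith
  next
    case 2
    then show ?thesis using \<open>p ^ Suc k \<le> 1\<close> by (simp add: reach_within_in)
  next
    case 3
    define q where "q b = (\<Sum>a\<in>UNIV. \<Sum>t\<in>UNIV. pmf (\<xi> ?s) a * pmf (\<delta> ?s a b) t * ?R k (h @ [t]))" for b
    have R_eq: "?R (Suc k) h = (\<Sum>b\<in>UNIV. pmf (\<pi>2 h) b * q b)"
      unfolding reach_within_Suc_notin[OF 3(1)] q_def memoryless_def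
      by (subst sum.swap) (simp add: sum_distrib_left mult_ac)
    have "p ^ Suc k \<le> q b" if "b \<in> set_pmf (\<pi>2 h)" for b
    proof -
      have "b \<in> G2 ?s" using that \<open>strategy G2 \<pi>2\<close> Suc.prems(1) unfolding strategy_def by blast
      then obtain a t where a: "a \<in> set_pmf (\<xi> ?s)" and t: "t \<in> set_pmf (\<delta> ?s a b)" "t \<in> ?Z"
        using 3(2) by blast
      then have "p \<le> pmf (\<xi> ?s) a * pmf (\<delta> ?s a b) t" using p by (simp add: set_pmf_iff)
      moreover have "p ^ k \<le> ?R k (h @ [t])" using Suc.IH[of "h @ [t]"] t by simp
      ultimately have "p * p ^ k \<le> pmf (\<xi> ?s) a * pmf (\<delta> ?s a b) t * ?R k (h @ [t])"
        using \<open>0 < p\<close> by (intro mult_mono) auto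
      also have "\<dots> \<le> (\<Sum>t\<in>UNIV. pmf (\<xi> ?s) a * pmf (\<delta> ?s a b) t * ?R k (h @ [t]))"
        by (rule member_le_sum) (auto intro!: mult_nonneg_nonneg reach_within_nonneg)
      also have "\<dots> \<le> q b"
        unfolding q_def by (rule member_le_sum) (auto intro!: sum_nonneg mult_nonneg_nonneg reach_within_nonneg)
      finally show ?thesis by simp
    qed
    then have "pmf (\<pi>2 h) b * p ^ Suc k \<le> pmf (\<pi>2 h) b * q b" for b
      by (cases "b \<in> set_pmf (\<pi>2 h)") (auto simp: set_pmf_iff intro: mult_left_mono)
    then have "(\<Sum>b\<in>UNIV. pmf (\<pi>2 h) b * p ^ Suc k) \<le> (\<Sum>b\<in>UNIV. pmf (\<pi>2 h) b * q b)"
      by (rule sum_mono)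
    moreover have "(\<Sum>b\<in>UNIV. pmf (\<pi>2 h) b * p ^ Suc k) = p ^ Suc k"
      by (simp add: sum_distrib_right[symmetric] sum_pmf_eq_1)
    ultimately show ?thesis unfolding R_eq by simp
  qed
qed simp

lemma ex_lower_bound_of_positive_values:
  fixes f :: "'a::finite \<Rightarrow> real"
  obtains p where "0 < p" and "p \<le> 1" and "\<forall>x. 0 < f x \<longrightarrow> p \<le> f x"
proof
  let ?P = "insert 1 {f x |x. 0 < f x}"
  have "finite ?P" by simp
  then show "0 < Min ?P" and "Min ?P \<le> 1" and "\<forall>x. 0 < f x \<longrightarrow> Min ?P \<le> f x"
    by (auto intro!: Min_le)
qed

lemma reach_prob_eq_1_of_no_trap:
  fixes \<xi> :: "'s::finite \<Rightarrow> 'm::finite pmf"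
  assumes no_trap: "\<forall>C. C \<noteq> {} \<longrightarrow> C \<inter> X = {} \<longrightarrow> \<not> trap G2 \<delta> (\<lambda>s. set_pmf (\<xi> s)) C"
    and "strategy G2 \<pi>2"
  shows "reach_prob \<delta> (memoryless \<xi>) \<pi>2 X s = 1"
proof -
  obtain K where "pos_attr G2 \<delta> \<xi> ((pos_attr G2 \<delta> \<xi> ^^ K) X) = (pos_attr G2 \<delta> \<xi> ^^ K) X"
    by (rule pos_attr_iter_fixpoint)
  then have "trap G2 \<delta> (\<lambda>s. set_pmf (\<xi> s)) (- (pos_attr G2 \<delta> \<xi> ^^ K) X)"
    by (rule trap_compl_pos_attr_fixpoint)
  moreover have "- (pos_attr G2 \<delta> \<xi> ^^ K) X \<inter> X = {}"
    using subset_pos_attr_iter[where k=K and X=X] by blast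
  ultimately have "(pos_attr G2 \<delta> \<xi> ^^ K) X = UNIV"
    using no_trap[rule_format, of "- (pos_attr G2 \<delta> \<xi> ^^ K) X"] by auto
  obtain p where "0 < p" "p \<le> 1"
    and p: "\<forall>x. 0 < (\<lambda>(s, a, b, t). pmf (\<xi> s) a * pmf (\<delta> s a b) t) x
               \<longrightarrow> p \<le> (\<lambda>(s, a, b, t). pmf (\<xi> s) a * pmf (\<delta> s a b) t) x"
    by (rule ex_lower_bound_of_positive_values)
  have "\<forall>s a b t. 0 < pmf (\<xi> s) a * pmf (\<delta> s a b) t \<longrightarrow> p \<le> pmf (\<xi> s) a * pmf (\<delta> s a b) t"
  proof (intro allI)
    fix s a b t show "0 < pmf (\<xi> s) a * pmf (\<delta> s a b) t \<longrightarrow> p \<le> pmf (\<xi> s) a * pmf (\<delta> s a b) t"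
      using p[rule_format, of "(s, a, b, t)"] by simp
  qed
  then have "\<forall>h. h \<noteq> [] \<longrightarrow> p ^ K \<le> reach_within \<delta> (memoryless \<xi>) \<pi>2 X K h"
    using reach_within_pos_attr_iter[OF \<open>strategy G2 \<pi>2\<close> \<open>0 < p\<close> \<open>p \<le> 1\<close>] \<open>_ = UNIV\<close> by simp
  then show ?thesis
    by (rule reach_prob_eq_1_of_uniform_bound) (use \<open>0 < p\<close> in simp)
qed

lemma selector_pmf_of_set: "\<forall>s. G s \<noteq> {} \<Longrightarrow> selector G (\<lambda>s. pmf_of_set (G s :: 'm::finite set))"
  by (simp add: selector_def set_pmf_of_set)

lemma strategies_nonempty: "\<forall>s. G s \<noteq> {} \<Longrightarrow> {\<pi>. strategy G (\<pi> :: 's list \<Rightarrow> 'm::finite pmf)} \<noteq> {}"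
  using memoryless_strategy[OF selector_pmf_of_set] by blast

lemma val1_strat_le_reach_prob:
  "strategy G2 \<pi>2 \<Longrightarrow> val1_strat G2 \<delta> \<pi>1 X s \<le> reach_prob \<delta> \<pi>1 \<pi>2 X s"
  unfolding val1_strat_def by (rule cINF_lower) (auto intro: bdd_belowI[where m=0] reach_prob_nonneg)

lemma val1_strat_nonneg: "\<forall>s. G2 s \<noteq> {} \<Longrightarrow> 0 \<le> val1_strat G2 \<delta> \<pi>1 X s"
  unfolding val1_strat_def using strategies_nonempty by (intro cINF_greatest) (auto intro: reach_prob_nonneg)

lemma ex_strategy_reach_prob_less:
  assumes "\<forall>s. G2 s \<noteq> {}" and "0 < e"
  obtains \<pi>2 where "strategy G2 \<pi>2" and "reach_prob \<delta> \<pi>1 \<pi>2 X s < val1_strat G2 \<delta> \<pi>1 X s + e"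
proof -
  have "Inf ((\<lambda>\<pi>2. reach_prob \<delta> \<pi>1 \<pi>2 X s) ` {\<pi>. strategy G2 \<pi>}) < val1_strat G2 \<delta> \<pi>1 X s + e"
    using \<open>0 < e\<close> unfolding val1_strat_def by simp
  from cInf_lessD[OF _ this] strategies_nonempty[OF assms(1)] that show thesis by auto
qed

text \<open>Play \<open>\<xi>\<close> at the first state; after the move to \<open>t\<close>, behave as \<open>\<sigma> t\<close> started
  at \<open>t\<close>, i.e. on the history without its first state.\<close>

definition first_then :: "('s \<Rightarrow> 'm pmf) \<Rightarrow> ('s \<Rightarrow> 's list \<Rightarrow> 'm pmf) \<Rightarrow> 's list \<Rightarrow> 'm pmf" where
  "first_then \<xi> \<sigma> h = (if tl h = [] then \<xi> (last h) else \<sigma> (hd (tl h)) (tl h))"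

lemma strategy_first_then:
  assumes "selector G \<xi>" and "\<forall>t. strategy G (\<sigma> t)"
  shows "strategy G (first_then \<xi> \<sigma>)"
  unfolding strategy_def
proof (intro allI impI)
  fix h :: "'a list" assume "h \<noteq> []"
  then show "set_pmf (first_then \<xi> \<sigma> h) \<subseteq> G (last h)"
    using assms by (cases h) (auto simp: first_then_def selector_def strategy_def)
qed

lemma reach_within_first_then_Cons:
  "h \<noteq> [] \<Longrightarrow> reach_within \<delta> (memoryless \<gamma>) (first_then \<xi> \<sigma>) X n (s # h)
     = reach_within \<delta> (memoryless \<gamma>) (\<sigma> (hd h)) X n h"
  by (induction n arbitrary: h) (simp_all add: first_then_def memoryless_def)

lemma reach_within_first_then:
  "s \<notin> X \<Longrightarrow> reach_within \<delta> (memoryless \<gamma>) (first_then \<xi> \<sigma>) X (Suc n) [s]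
     = (\<Sum>a\<in>UNIV. \<Sum>b\<in>UNIV. \<Sum>t\<in>UNIV. pmf (\<gamma> s) a * pmf (\<xi> s) b * pmf (\<delta> s a b) t
          * reach_within \<delta> (memoryless \<gamma>) (\<sigma> t) X n [t])"
  using reach_within_first_then_Cons[of "[_]" \<delta> \<gamma> \<xi> \<sigma> X n s]
  by (simp add: first_then_def memoryless_def)

lemma sel_val_nonneg: "\<forall>s. G2 s \<noteq> {} \<Longrightarrow> 0 \<le> sel_val G2 \<delta> T \<gamma> s"
  unfolding sel_val_def by (rule val1_strat_nonneg)

lemma PreAB_nonneg: "\<forall>t. 0 \<le> v t \<Longrightarrow> 0 \<le> PreAB \<delta> \<xi>1 \<xi>2 v s"
  unfolding PreAB_def by (intro sum_nonneg mult_nonneg_nonneg) auto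

text \<open>Player 2 can answer \<open>\<xi>2\<close> for one step and then play \<open>\<epsilon>\<close>-optimally against \<open>\<gamma>\<close>.\<close>

lemma sel_val_le_PreAB:
  fixes \<gamma> :: "'s::finite \<Rightarrow> 'm::finite pmf"
  assumes G2_ne: "\<forall>s. G2 s \<noteq> {}" and "selector G2 \<xi>2" and "s \<notin> T"
  shows "sel_val G2 \<delta> T \<gamma> s \<le> PreAB \<delta> \<gamma> \<xi>2 (sel_val G2 \<delta> T \<gamma>) s"
proof (rule field_le_epsilon)
  fix e :: real assume "0 < e"
  let ?v = "sel_val G2 \<delta> T \<gamma>"
  let ?R = "\<lambda>\<pi>2. reach_within \<delta> (memoryless \<gamma>) \<pi>2 T"
  let ?w = "\<lambda>a b t. pmf (\<gamma> s) a * pmf (\<xi>2 s) b * pmf (\<delta> s a b) t"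
  have "\<exists>\<pi>2. strategy G2 \<pi>2 \<and> reach_prob \<delta> (memoryless \<gamma>) \<pi>2 T t < ?v t + e" for t
    unfolding sel_val_def by (rule ex_strategy_reach_prob_less[OF G2_ne \<open>0 < e\<close>]) blast
  then obtain \<sigma> where \<sigma>: "\<forall>t. strategy G2 (\<sigma> t) \<and> reach_prob \<delta> (memoryless \<gamma>) (\<sigma> t) T t < ?v t + e"
    by metis
  have PreAB_plus: "PreAB \<delta> \<gamma> \<xi>2 ?v s + e = (\<Sum>a\<in>UNIV. \<Sum>b\<in>UNIV. \<Sum>t\<in>UNIV. ?w a b t * (?v t + e))"
  proof -
    have "(\<Sum>a\<in>UNIV. \<Sum>b\<in>UNIV. \<Sum>t\<in>UNIV. ?w a b t * (?v t + e))
        = (\<Sum>a\<in>UNIV. \<Sum>b\<in>UNIV. \<Sum>t\<in>UNIV. ?w a b t * ?v t) + e * (\<Sum>a\<in>UNIV. \<Sum>b\<in>UNIV. \<Sum>t\<in>UNIV. ?w a b t)"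
      by (simp add: distrib_left sum.distrib sum_distrib_left mult_ac)
    then show ?thesis
      using sum_joint_pmf_eq_1[of "\<gamma> s" "\<xi>2 s" "\<delta> s"] unfolding PreAB_def by (simp add: mult_ac)
  qed
  have "?R (first_then \<xi>2 \<sigma>) n [s] \<le> PreAB \<delta> \<gamma> \<xi>2 ?v s + e" for n
  proof (cases n)
    case 0
    have "0 \<le> PreAB \<delta> \<gamma> \<xi>2 ?v s" by (rule PreAB_nonneg) (simp add: sel_val_nonneg[OF G2_ne])
    then show ?thesis using 0 \<open>s \<notin> T\<close> \<open>0 < e\<close> by simp
  next
    case (Suc m)
    have "?R (\<sigma> t) m [t] \<le> ?v t + e" for t
      using reach_within_le_reach_prob[of \<delta> "memoryless \<gamma>" "\<sigma> t" T m t] \<sigma> by (meson less_imp_le order_trans)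
    then have "?R (first_then \<xi>2 \<sigma>) n [s] \<le> (\<Sum>a\<in>UNIV. \<Sum>b\<in>UNIV. \<Sum>t\<in>UNIV. ?w a b t * (?v t + e))"
      unfolding Suc reach_within_first_then[OF \<open>s \<notin> T\<close>] by (intro sum_mono mult_left_mono) auto
    then show ?thesis using PreAB_plus by simp
  qed
  then have "reach_prob \<delta> (memoryless \<gamma>) (first_then \<xi>2 \<sigma>) T s \<le> PreAB \<delta> \<gamma> \<xi>2 ?v s + e"
    unfolding reach_prob_def by (intro cSUP_least) auto
  moreover have "strategy G2 (first_then \<xi>2 \<sigma>)"
    using strategy_first_then \<open>selector G2 \<xi>2\<close> \<sigma> by blast
  ultimately show "?v s \<le> PreAB \<delta> \<gamma> \<xi>2 ?v s + e"
    unfolding sel_val_def using val1_strat_le_reach_prob order_trans by blast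
qed

lemma sel_val_le_Pre1_sel:
  assumes "\<forall>s. G2 s \<noteq> {}" and "s \<notin> T"
  shows "sel_val G2 \<delta> T \<gamma> s \<le> Pre1_sel G2 \<delta> \<gamma> (sel_val G2 \<delta> T \<gamma>) s"
  unfolding Pre1_sel_def using selector_pmf_of_set[OF assms(1)]
  by (intro cINF_greatest) (auto intro: sel_val_le_PreAB[OF assms(1) _ assms(2)])

lemma Pre1_sel_le_PreAB:
  "\<forall>t. 0 \<le> v t \<Longrightarrow> selector G2 \<xi>2 \<Longrightarrow> Pre1_sel G2 \<delta> \<xi> v s \<le> PreAB \<delta> \<xi> \<xi>2 v s"
  unfolding Pre1_sel_def by (rule cINF_lower) (auto intro: bdd_belowI[where m=0] PreAB_nonneg)

lemma Pre1_sel_cong: "\<xi> s = \<xi>' s \<Longrightarrow> Pre1_sel G2 \<delta> \<xi> v s = Pre1_sel G2 \<delta> \<xi>' v s"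
  unfolding Pre1_sel_def PreAB_def by simp

lemma proper_selector_iff_no_trap:
  fixes \<xi> :: "'s::finite \<Rightarrow> 'm::finite pmf"
  assumes "\<forall>s. G2 s \<noteq> {}"
  shows "proper_selector G1 G2 \<delta> T \<xi> \<longleftrightarrow>
    (\<forall>C. C \<noteq> {} \<longrightarrow> C \<inter> (T \<union> W2 G1 G2 \<delta> T) = {} \<longrightarrow> \<not> trap G2 \<delta> (\<lambda>s. set_pmf (\<xi> s)) C)"
proof
  assume proper: "proper_selector G1 G2 \<delta> T \<xi>"
  show "\<forall>C. C \<noteq> {} \<longrightarrow> C \<inter> (T \<union> W2 G1 G2 \<delta> T) = {} \<longrightarrow> \<not> trap G2 \<delta> (\<lambda>s. set_pmf (\<xi> s)) C"
  proof (intro allI impI notI)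
    fix C
    assume "C \<noteq> {}" and disj: "C \<inter> (T \<union> W2 G1 G2 \<delta> T) = {}"
      and C_trap: "trap G2 \<delta> (\<lambda>s. set_pmf (\<xi> s)) C"
    obtain \<pi>2 where "strategy G2 \<pi>2"
      and zero: "\<forall>\<pi>1 s. (\<forall>h. h \<noteq> [] \<longrightarrow> set_pmf (\<pi>1 h) \<subseteq> set_pmf (\<xi> (last h))) \<longrightarrow> s \<in> C
                   \<longrightarrow> reach_prob \<delta> \<pi>1 \<pi>2 (T \<union> W2 G1 G2 \<delta> T) s = 0"
      using ex_trap_strategy[OF C_trap assms disj] by blast
    obtain s where "s \<in> C" using \<open>C \<noteq> {}\<close> by blast
    then have "reach_prob \<delta> (memoryless \<xi>) \<pi>2 (T \<union> W2 G1 G2 \<delta> T) s = 0"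
      using zero by (simp add: memoryless_def)
    moreover have "reach_prob \<delta> (memoryless \<xi>) \<pi>2 (T \<union> W2 G1 G2 \<delta> T) s = 1"
      using proper \<open>strategy G2 \<pi>2\<close> \<open>s \<in> C\<close> disj unfolding proper_selector_def proper_def by blast
    ultimately show False by simp
  qed
next
  assume no_trap: "\<forall>C. C \<noteq> {} \<longrightarrow> C \<inter> (T \<union> W2 G1 G2 \<delta> T) = {} \<longrightarrow> \<not> trap G2 \<delta> (\<lambda>s. set_pmf (\<xi> s)) C"
  show "proper_selector G1 G2 \<delta> T \<xi>"
    unfolding proper_selector_def proper_def
  proof (intro allI impI)
    fix \<pi>2 s assume "strategy G2 \<pi>2"
    then show "reach_prob \<delta> (memoryless \<xi>) \<pi>2 (T \<union> W2 G1 G2 \<delta> T) s = 1"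
      by (rule reach_prob_eq_1_of_no_trap[OF no_trap])
  qed
qed

lemma val1_eq_0_in_trap:
  fixes G1 G2 :: "'s::finite \<Rightarrow> 'm::finite set"
  assumes "\<forall>s. G1 s \<noteq> {}" and "\<forall>s. G2 s \<noteq> {}"
    and "trap G2 \<delta> G1 C" and "C \<inter> T = {}" and "s \<in> C"
  shows "val1 G1 G2 \<delta> T s = 0"
proof -
  obtain \<pi>2 where "strategy G2 \<pi>2"
    and zero: "\<forall>\<pi>1 s. (\<forall>h. h \<noteq> [] \<longrightarrow> set_pmf (\<pi>1 h) \<subseteq> G1 (last h)) \<longrightarrow> s \<in> C
                 \<longrightarrow> reach_prob \<delta> \<pi>1 \<pi>2 T s = 0"
    using ex_trap_strategy[OF assms(3,2,4)] by blast
  have "val1_strat G2 \<delta> \<pi>1 T s = 0" if "strategy G1 \<pi>1" for \<pi>1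
    using val1_strat_le_reach_prob[OF \<open>strategy G2 \<pi>2\<close>, of \<delta> \<pi>1 T s] zero that \<open>s \<in> C\<close>
      val1_strat_nonneg[OF assms(2), of \<delta> \<pi>1 T s]
    by (simp add: strategy_def)
  then have "val1 G1 G2 \<delta> T s = (SUP \<pi>1\<in>{\<pi>. strategy G1 \<pi>}. 0)"
    unfolding val1_def by (intro SUP_cong) auto
  also have "\<dots> = 0" using strategies_nonempty[OF assms(1)] by simp
  finally show ?thesis .
qed

lemma proper_selector_uniform:
  fixes G1 G2 :: "'s::finite \<Rightarrow> 'm::finite set"
  assumes G1_ne: "\<forall>s. G1 s \<noteq> {}" and G2_ne: "\<forall>s. G2 s \<noteq> {}"
  shows "proper_selector G1 G2 \<delta> T (\<lambda>s. pmf_of_set (G1 s))"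
  unfolding proper_selector_iff_no_trap[OF G2_ne]
proof (intro allI impI notI)
  fix C
  assume "C \<noteq> {}" and disj: "C \<inter> (T \<union> W2 G1 G2 \<delta> T) = {}"
    and "trap G2 \<delta> (\<lambda>s. set_pmf (pmf_of_set (G1 s))) C"
  then have "trap G2 \<delta> G1 C" using G1_ne by (simp add: set_pmf_of_set)
  moreover have "C \<inter> T = {}" using disj by blast
  ultimately have "C \<subseteq> W2 G1 G2 \<delta> T"
    using val1_eq_0_in_trap[OF G1_ne G2_ne] by (auto simp: W2_def)
  then show False using \<open>C \<noteq> {}\<close> disj by blast
qed

lemma PreAB_return_eq_bind:
  fixes \<delta> :: "'s::finite \<Rightarrow> 'm::finite \<Rightarrow> 'm \<Rightarrow> 's pmf"
  shows "PreAB \<delta> \<xi> (\<lambda>s. return_pmf (b s)) v s = (\<Sum>t\<in>UNIV. pmf (bind_pmf (\<xi> s) (\<lambda>a. \<delta> s a (b s))) t * v t)"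
proof -
  have "(\<Sum>b'\<in>UNIV. \<Sum>t\<in>UNIV. v t * pmf (\<delta> s a b') t * pmf (\<xi> s) a * pmf (return_pmf (b s)) b')
      = (\<Sum>b'\<in>UNIV. if b' = b s then \<Sum>t\<in>UNIV. v t * pmf (\<delta> s a b') t * pmf (\<xi> s) a else 0)" for a
    by (intro sum.cong) (auto simp: pmf_return)
  then show ?thesis
    unfolding PreAB_def pmf_bind_eq_sum
    by (simp add: sum.delta' sum_distrib_right mult_ac) (subst sum.swap, simp add: sum_distrib_left)
qed

text \<open>Maximum principle for a function that is subharmonic on a closed class of a Markov chain.\<close>

lemma argmax_closed:
  fixes v :: "'s::finite \<Rightarrow> real"
  assumes "C \<noteq> {}" and closed: "\<forall>s\<in>C. set_pmf (\<mu> s) \<subseteq> C"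
    and sub: "\<forall>s\<in>C. v s \<le> (\<Sum>t\<in>UNIV. pmf (\<mu> s) t * v t)"
  obtains C' where "C' \<noteq> {}" and "C' \<subseteq> C"
    and "\<forall>s\<in>C'. set_pmf (\<mu> s) \<subseteq> C' \<and> v s = (\<Sum>t\<in>UNIV. pmf (\<mu> s) t * v t)"
proof -
  define M where "M = Max (v ` C)"
  let ?C' = "{s\<in>C. v s = M}"
  have le_M: "v t \<le> M" if "t \<in> C" for t unfolding M_def using that by simp
  have "M \<in> v ` C" unfolding M_def using \<open>C \<noteq> {}\<close> by (intro Max_in) auto
  then have "?C' \<noteq> {}" by auto
  moreover have "?C' \<subseteq> C" by blast
  moreover have "\<forall>s\<in>?C'. set_pmf (\<mu> s) \<subseteq> ?C' \<and> v s = (\<Sum>t\<in>UNIV. pmf (\<mu> s) t * v t)"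
  proof
    fix s assume "s \<in> ?C'"
    then have "s \<in> C" and "v s = M" by auto
    let ?E = "\<Sum>t\<in>UNIV. pmf (\<mu> s) t * v t"
    have nonneg: "0 \<le> pmf (\<mu> s) t * (M - v t)" for t
    proof (cases "t \<in> set_pmf (\<mu> s)")
      case True
      then have "t \<in> C" using closed \<open>s \<in> C\<close> by blast
      then show ?thesis using le_M by simp
    qed (simp add: set_pmf_iff)
    have gap: "(\<Sum>t\<in>UNIV. pmf (\<mu> s) t * (M - v t)) = M - ?E"
      by (simp add: right_diff_distrib sum_subtractf sum_pmf_eq_1 flip: sum_distrib_right)
    have "M \<le> ?E" using sub \<open>s \<in> C\<close> \<open>v s = M\<close> by auto
    moreover have "0 \<le> M - ?E" unfolding gap[symmetric] using nonneg by (rule sum_nonneg)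
    ultimately have "M = ?E" and "(\<Sum>t\<in>UNIV. pmf (\<mu> s) t * (M - v t)) = 0"
      using gap by linarith+
    then have zero: "pmf (\<mu> s) t * (M - v t) = 0" for t
      using nonneg by (subst (asm) sum_nonneg_eq_0_iff) auto
    have "v t = M" if "t \<in> set_pmf (\<mu> s)" for t
      using zero[of t] that by (simp add: set_pmf_iff)
    then show "set_pmf (\<mu> s) \<subseteq> ?C' \<and> v s = ?E"
      using closed \<open>s \<in> C\<close> \<open>v s = M\<close> \<open>M = ?E\<close> by blast
  qed
  ultimately show thesis by (rule that)
qed

text \<open>A trap of \<open>\<gamma>'\<close> contains a trap of \<open>\<gamma>\<close>: the states where the value of \<open>\<gamma>\<close> is maximal.\<close>

lemma proper_selector_switch:
  fixes \<gamma> \<gamma>' :: "'s::finite \<Rightarrow> 'm::finite pmf"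
  assumes G2_ne: "\<forall>s. G2 s \<noteq> {}" and proper: "proper_selector G1 G2 \<delta> T \<gamma>"
    and agree: "\<forall>s. s \<notin> I \<longrightarrow> \<gamma>' s = \<gamma> s"
    and gain: "\<forall>s\<in>I. sel_val G2 \<delta> T \<gamma> s < Pre1_sel G2 \<delta> \<gamma>' (sel_val G2 \<delta> T \<gamma>) s"
  shows "proper_selector G1 G2 \<delta> T \<gamma>'"
  unfolding proper_selector_iff_no_trap[OF G2_ne]
proof (intro allI impI notI)
  let ?v = "sel_val G2 \<delta> T \<gamma>"
  fix C
  assume "C \<noteq> {}" and disj: "C \<inter> (T \<union> W2 G1 G2 \<delta> T) = {}"
    and "trap G2 \<delta> (\<lambda>s. set_pmf (\<gamma>' s)) C"
  then obtain b where b_G2: "\<forall>s. b s \<in> G2 s" and b: "\<forall>s\<in>C. \<forall>a\<in>set_pmf (\<gamma>' s). set_pmf (\<delta> s a (b s)) \<subseteq> C"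
    using trap_witness G2_ne by metis
  define \<mu> where "\<mu> s = bind_pmf (\<gamma>' s) (\<lambda>a. \<delta> s a (b s))" for s
  have "selector G2 (\<lambda>s. return_pmf (b s))" using b_G2 by (simp add: selector_def)
  then have "Pre1_sel G2 \<delta> \<gamma>' ?v s \<le> PreAB \<delta> \<gamma>' (\<lambda>s. return_pmf (b s)) ?v s" for s
    using sel_val_nonneg[OF G2_ne] by (intro Pre1_sel_le_PreAB) auto
  then have Pre1_sel_le: "Pre1_sel G2 \<delta> \<gamma>' ?v s \<le> (\<Sum>t\<in>UNIV. pmf (\<mu> s) t * ?v t)" for s
    by (simp only: PreAB_return_eq_bind \<mu>_def)
  have subharmonic: "?v s \<le> (\<Sum>t\<in>UNIV. pmf (\<mu> s) t * ?v t) \<and> (s \<in> I \<longrightarrow> ?v s < (\<Sum>t\<in>UNIV. pmf (\<mu> s) t * ?v t))"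
    if "s \<in> C" for s
  proof (cases "s \<in> I")
    case False
    have "s \<notin> T" using disj that by blast
    then have "?v s \<le> Pre1_sel G2 \<delta> \<gamma> ?v s" by (rule sel_val_le_Pre1_sel[OF G2_ne])
    also have "\<dots> = Pre1_sel G2 \<delta> \<gamma>' ?v s" using agree False by (intro Pre1_sel_cong) simp
    also have "\<dots> \<le> (\<Sum>t\<in>UNIV. pmf (\<mu> s) t * ?v t)" by (rule Pre1_sel_le)
    finally show ?thesis using False by simp
  next
    case True
    then have "?v s < Pre1_sel G2 \<delta> \<gamma>' ?v s" using gain by blast
    also have "\<dots> \<le> (\<Sum>t\<in>UNIV. pmf (\<mu> s) t * ?v t)" by (rule Pre1_sel_le)
    finally show ?thesis by simp
  qed
  have "\<forall>s\<in>C. set_pmf (\<mu> s) \<subseteq> C" using b by (auto simp: \<mu>_def)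
  moreover have "\<forall>s\<in>C. ?v s \<le> (\<Sum>t\<in>UNIV. pmf (\<mu> s) t * ?v t)" using subharmonic by blast
  ultimately obtain C' where "C' \<noteq> {}" "C' \<subseteq> C"
    and C': "\<forall>s\<in>C'. set_pmf (\<mu> s) \<subseteq> C' \<and> ?v s = (\<Sum>t\<in>UNIV. pmf (\<mu> s) t * ?v t)"
    by (rule argmax_closed[OF \<open>C \<noteq> {}\<close>])
  have "set_pmf (\<delta> s a (b s)) \<subseteq> C'" if "s \<in> C'" and "a \<in> set_pmf (\<gamma> s)" for s a
  proof -
    have "s \<notin> I" using C' subharmonic[of s] that(1) \<open>C' \<subseteq> C\<close> by auto
    then have "a \<in> set_pmf (\<gamma>' s)" using agree that(2) by simp
    then have "set_pmf (\<delta> s a (b s)) \<subseteq> set_pmf (\<mu> s)" by (auto simp: \<mu>_def)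
    then show ?thesis using C' that(1) by blast
  qed
  then have "trap G2 \<delta> (\<lambda>s. set_pmf (\<gamma> s)) C'"
    unfolding trap_def using b_G2 by blast
  moreover have "C' \<inter> (T \<union> W2 G1 G2 \<delta> T) = {}" using disj \<open>C' \<subseteq> C\<close> by blast
  ultimately show False
    using proper[unfolded proper_selector_iff_no_trap[OF G2_ne], rule_format, OF \<open>C' \<noteq> {}\<close>] by blast
qed

theorem lemma7:
  fixes G1 G2 :: "'s::finite \<Rightarrow> 'm::finite set"
    and \<delta> :: "'s \<Rightarrow> 'm \<Rightarrow> 'm \<Rightarrow> 's pmf"
    and T :: "'s set"
    and \<gamma> :: "nat \<Rightarrow> 's \<Rightarrow> 'm pmf"
  assumes G1_ne: "\<forall>s. G1 s \<noteq> {}"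
    and G2_ne: "\<forall>s. G2 s \<noteq> {}"
    and absorbing: "\<forall>s \<in> T \<union> W2 G1 G2 \<delta> T. \<forall>a \<in> G1 s. \<forall>b \<in> G2 s. \<delta> s a b = return_pmf s"
    and init: "\<gamma> 0 = (\<lambda>s. pmf_of_set (G1 s))"
    and step: "\<forall>i. \<exists>\<xi>1. selector G1 \<xi>1
                 \<and> (\<forall>s \<in> improve_set G1 G2 \<delta> T (\<gamma> i).
                       Pre1_sel G2 \<delta> \<xi>1 (sel_val G2 \<delta> T (\<gamma> i)) s
                         = Pre1 G1 G2 \<delta> (sel_val G2 \<delta> T (\<gamma> i)) s)
                 \<and> \<gamma> (Suc i) = (\<lambda>s. if s \<in> improve_set G1 G2 \<delta> T (\<gamma> i) then \<xi>1 s else \<gamma> i s)"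
  shows "\<forall>i. proper_selector G1 G2 \<delta> T (\<gamma> i)"
proof
  fix i
  show "proper_selector G1 G2 \<delta> T (\<gamma> i)"
  proof (induction i)
    case 0
    show ?case unfolding init by (rule proper_selector_uniform[OF G1_ne G2_ne])
  next
    case (Suc i)
    let ?I = "improve_set G1 G2 \<delta> T (\<gamma> i)" and ?v = "sel_val G2 \<delta> T (\<gamma> i)"
    obtain \<xi>1 where opt: "\<forall>s\<in>?I. Pre1_sel G2 \<delta> \<xi>1 ?v s = Pre1 G1 G2 \<delta> ?v s"
      and \<gamma>_Suc: "\<gamma> (Suc i) = (\<lambda>s. if s \<in> ?I then \<xi>1 s else \<gamma> i s)"
      using step[rule_format, of i] by blast
    have "\<forall>s. s \<notin> ?I \<longrightarrow> \<gamma> (Suc i) s = \<gamma> i s" by (simp add: \<gamma>_Suc)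
    moreover have "\<forall>s\<in>?I. ?v s < Pre1_sel G2 \<delta> (\<gamma> (Suc i)) ?v s"
    proof
      fix s assume "s \<in> ?I"
      then have "?v s < Pre1 G1 G2 \<delta> ?v s" by (simp add: improve_set_def)
      also have "\<dots> = Pre1_sel G2 \<delta> \<xi>1 ?v s" using opt \<open>s \<in> ?I\<close> by simp
      also have "\<dots> = Pre1_sel G2 \<delta> (\<gamma> (Suc i)) ?v s"
        by (rule Pre1_sel_cong) (simp add: \<gamma>_Suc \<open>s \<in> ?I\<close>)
      finally show "?v s < Pre1_sel G2 \<delta> (\<gamma> (Suc i)) ?v s" .
    qed
    ultimately show ?case by (rule proper_selector_switch[OF G2_ne Suc.IH])
  qed
qed

end
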